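(* Let $n\ge 1$ and $m\ge 2$ be integers with $m\nmid n$, and let $\ell=\lfloor n/m\rfloor$. Then $k=\ell+1$ is the smallest nonnegative integer $k$ for which $\theta_{m,k}=\mathbf{0}$ (the map sending every $x\in\mathbb{F}_2^n$ to the zero vector).
   Context: For $x=(x_0,\dots,x_{n-1})\in\mathbb{F}_2^n$, indices of coordinates are taken modulo $n$. For a nonnegative integer $k$, the map $\theta_{m,k}\colon\mathbb{F}_2^n\to\mathbb{F}_2^n$ is defined by $\theta_{m,k}(x)=y$ with $y_i=x_{i+mk}\prod_{1\le j\le mk-1,\ m\nmid j}(x_{i+j}+1)$ for $i\in\{0,\dots,n-1\}$ (for $k=0$ the empty product is $1$, so $\theta_{m,0}$ is the identity map). *)

theory Defs
  imports Main "HOL-Library.Z2"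
begin

text \<open>Vectors of F_2^n are represented as functions x :: nat => bit, where only
  the coordinates 0..n-1 are relevant; coordinate indices are read modulo n.\<close>

definition theta :: "nat \<Rightarrow> nat \<Rightarrow> nat \<Rightarrow> (nat \<Rightarrow> bit) \<Rightarrow> (nat \<Rightarrow> bit)" where
  "theta n m k x = (\<lambda>i. x ((i + m * k) mod n) *
      (\<Prod>j\<in>{j. 1 \<le> j \<and> j \<le> m * k - 1 \<and> \<not> m dvd j}. x ((i + j) mod n) + 1))"

definition theta_zero :: "nat \<Rightarrow> nat \<Rightarrow> nat \<Rightarrow> bool" where
  "theta_zero n m k = (\<forall>x::nat \<Rightarrow> bit. \<forall>i<n. theta n m k x i = 0)"

end

theory Submission
  imports Defs
begin

text \<open>The coordinate x_{i+mk} enters theta_{m,k}(x)_i both as a factor and, negated, in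
  the product as soon as some j < mk with m not dividing j satisfies j = mk (mod n); then
  every output is a * (a + 1) = 0. For k = l + 1 the index j = mk - n = m - (n mod m) is such
  a collision. For k \<le> l we have mk < n, so no collision occurs and the indicator vector of
  coordinate mk is mapped to a vector with first coordinate 1.\<close>

lemma bit_mult_self_plus_one: "(a::bit) * (a + 1) = 0"
  by (cases a) simp_all

lemma theta_zero_if_collision:
  assumes "1 \<le> j" "j \<le> m * k - 1" "\<not> m dvd j" "j mod n = (m * k) mod n"
  shows "theta_zero n m k"
  unfolding theta_zero_def
proof (intro allI impI)
  fix x :: "nat \<Rightarrow> bit" and i
  define S where "S = {j. 1 \<le> j \<and> j \<le> m * k - 1 \<and> \<not> m dvd j}"
  have "finite S"
    unfolding S_def by (rule finite_subset[of _ "{..m * k}"]) auto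
  moreover have "j \<in> S"
    using assms(1-3) unfolding S_def by simp
  moreover have same_coordinate: "(i + m * k) mod n = (i + j) mod n"
    using assms(4) by (metis mod_add_right_eq)
  ultimately have "theta n m k x i = x ((i + j) mod n) * (x ((i + j) mod n) + 1) *
      (\<Prod>j'\<in>S - {j}. x ((i + j') mod n) + 1)"
    unfolding theta_def S_def[symmetric] same_coordinate
    by (simp add: prod.remove mult.assoc)
  then show "theta n m k x i = 0"
    by (simp only: bit_mult_self_plus_one mult_zero_left)
qed

lemma not_theta_zero_if_less:
  assumes "m * k < n"
  shows "\<not> theta_zero n m k"
proof
  define x :: "nat \<Rightarrow> bit" where "x = (\<lambda>t. if t = m * k then 1 else 0)"
  have "theta n m k x 0 = 1"
    unfolding theta_def x_def using assms by (auto intro!: prod.neutral)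
  moreover assume "theta_zero n m k"
  then have "theta n m k x 0 = 0"
    using assms unfolding theta_zero_def by simp
  ultimately show False by simp
qed

lemma mult_div_less_if_not_dvd:
  fixes m n :: nat
  assumes "\<not> m dvd n"
  shows "m * (n div m) < n"
proof (rule le_neq_implies_less)
  show "m * (n div m) \<le> n" by simp
  show "m * (n div m) \<noteq> n" using assms by (metis dvd_triv_left)
qed

theorem corollary1:
  fixes n m :: nat
  assumes "n \<ge> 1" and "m \<ge> 2" and "\<not> m dvd n"
  shows "theta_zero n m (n div m + 1) \<and> (\<forall>k < n div m + 1. \<not> theta_zero n m k)"
proof
  define j where "j = m - n mod m"
  have "0 < n mod m" "n mod m < m"
    using assms(2,3) by (simp_all add: dvd_eq_mod_eq_0)
  then have "1 \<le> j" "j < m" "\<not> m dvd j"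
    unfolding j_def by (auto dest: dvd_imp_le)
  moreover have "m * (n div m + 1) = n + j"
    using \<open>n mod m < m\<close> mult_div_mod_eq[of m n] unfolding j_def distrib_left by linarith
  ultimately show "theta_zero n m (n div m + 1)"
    by (intro theta_zero_if_collision[of j]) simp_all
  show "\<forall>k < n div m + 1. \<not> theta_zero n m k"
  proof (intro allI impI not_theta_zero_if_less)
    fix k assume "k < n div m + 1"
    then have "m * k \<le> m * (n div m)" by simp
    also have "\<dots> < n" using assms(3) by (rule mult_div_less_if_not_dvd)
    finally show "m * k < n" .
  qed
qed

end
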